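(* Let $f:\mathbb{R}^n\to\mathbb{R}$ be continuously differentiable with $L$-Lipschitz continuous gradient ($L>0$) and bounded below on $\mathbb{R}^n$ by $f_{\mathrm{low}}$. Run the direct-search algorithm described below with $\Omega=\mathbb{R}^n$, and suppose that at every iteration $k$ the polling set $\mathcal{D}_k$ is a $\Lambda$-positive spanning set for $B(x_k,\alpha_k)$ and satisfies $\|d\|\le d_{\max}\alpha_k$ for all $d\in\mathcal{D}_k$, for some constants $\Lambda>0$, $d_{\max}>0$. If $\nabla f(x_k)\neq 0$ and $\alpha_k<\frac{2\|\nabla f(x_k)\|}{(Ld_{\max}^2+\sigma)\Lambda}$, then iteration $k$ is successful.
   Context: $\|\cdot\|$ is the Euclidean norm, $B(y,r)=\{z:\|z-y\|\le r\}$. Given $x\in\mathbb{R}^n$, $\alpha>0$, $\Lambda>0$, a finite set $\{d_1,\ldots,d_p\}\subset\mathbb{R}^n$ is a $\Lambda$-positive spanning set for $B(x,\alpha)$ if for every $v\in B(0,\alpha)$ there exists $c\in\mathbb{R}^p$, $c\ge0$, with $v=\sum_i c_id_i$ and $\sum_i c_i\le\Lambda$. The algorithm (for minimizing $f$ over a set $\Omega$, here $\Omega=\mathbb{R}^n$): inputs $x_0\in\Omega$, $\alpha_{\max}>0$, $\alpha_0\in(0,\alpha_{\max}]$, $\sigma>0$, $0<\gamma_{\mathrm{dec}}<1<\gamma_{\mathrm{inc}}$. For $k=0,1,2,\ldots$: compute a finite polling set $\mathcal{D}_k\subset\mathbb{R}^n$; if there exists $d_k\in\mathcal{D}_k$ with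 $x_k+d_k\in\Omega$ and $f(x_k+d_k)<f(x_k)-\frac{\sigma}{2}\alpha_k^2$, set $x_{k+1}=x_k+d_k$ and $\alpha_{k+1}=\min\{\gamma_{\mathrm{inc}}\alpha_k,\alpha_{\max}\}$ (the iteration is called successful); otherwise set $x_{k+1}=x_k$, $\alpha_{k+1}=\gamma_{\mathrm{dec}}\alpha_k$ (unsuccessful). *)

theory Defs
  imports "HOL-Analysis.Analysis"
begin

definition pos_spanning_set :: "real \<Rightarrow> 'a::real_normed_vector set \<Rightarrow> 'a \<Rightarrow> real \<Rightarrow> bool" where
  "pos_spanning_set Lam D x alpha \<longleftrightarrow> finite D \<and>
     (\<forall>v\<in>cball 0 alpha. \<exists>c::'a \<Rightarrow> real. (\<forall>d\<in>D. 0 \<le> c d) \<and>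
         v = (\<Sum>d\<in>D. c d *\<^sub>R d) \<and> (\<Sum>d\<in>D. c d) \<le> Lam)"

definition successful_iter ::
  "('a \<Rightarrow> real) \<Rightarrow> (nat \<Rightarrow> 'a::real_normed_vector) \<Rightarrow> (nat \<Rightarrow> real) \<Rightarrow> (nat \<Rightarrow> 'a set) \<Rightarrow> real \<Rightarrow> nat \<Rightarrow> bool" where
  "successful_iter f x alpha D sig k \<longleftrightarrow>
     (\<exists>d\<in>D k. f (x k + d) < f (x k) - sig / 2 * (alpha k)\<^sup>2)"

definition ds_run ::
  "('a \<Rightarrow> real) \<Rightarrow> real \<Rightarrow> real \<Rightarrow> real \<Rightarrow> real \<Rightarrow>
   (nat \<Rightarrow> 'a::real_normed_vector) \<Rightarrow> (nat \<Rightarrow> real) \<Rightarrow> (nat \<Rightarrow> 'a set) \<Rightarrow> bool" where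
  "ds_run f alpha_max sig gdec ginc x alpha D \<longleftrightarrow>
     0 < alpha_max \<and> 0 < alpha 0 \<and> alpha 0 \<le> alpha_max \<and> 0 < sig \<and>
     0 < gdec \<and> gdec < 1 \<and> 1 < ginc \<and>
     (\<forall>k. finite (D k) \<and>
        (if successful_iter f x alpha D sig k
         then (\<exists>d\<in>D k. f (x k + d) < f (x k) - sig / 2 * (alpha k)\<^sup>2 \<and> x (Suc k) = x k + d)
              \<and> alpha (Suc k) = min (ginc * alpha k) alpha_max
         else x (Suc k) = x k \<and> alpha (Suc k) = gdec * alpha k))"

end

theory Submission
  imports Defs
begin

text \<open>At a non-stationary iterate, some poll direction makes an obtuse angle with the gradient,
  uniformly so because the steepest-descent step of length \<open>alpha\<close> is a bounded nonnegative
  combination of poll directions. With the quadratic upper bound coming from the Lipschitz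
  gradient, that direction already yields sufficient decrease once \<open>alpha\<close> is small compared
  with the gradient norm.\<close>

lemma lipschitz_gradient_quadratic_upper_bound:
  fixes f :: "'a::real_inner \<Rightarrow> real" and g :: "'a \<Rightarrow> 'a"
  assumes grad: "\<And>y. (f has_derivative (\<lambda>h. g y \<bullet> h)) (at y)"
    and lipschitz: "\<And>y z. norm (g y - g z) \<le> L * norm (y - z)"
  shows "f (y + d) \<le> f y + g y \<bullet> d + L / 2 * (norm d)\<^sup>2"
proof -
  define phi where "phi t = f (y + t *\<^sub>R d) - t * (g y \<bullet> d) - L / 2 * t\<^sup>2 * (norm d)\<^sup>2" for t
  define phi' where "phi' t = g (y + t *\<^sub>R d) \<bullet> d - g y \<bullet> d - L * t * (norm d)\<^sup>2" for t
  have phi_deriv: "(phi has_real_derivative phi' t) (at t)" for t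
  proof -
    have "((\<lambda>t. y + t *\<^sub>R d) has_derivative (\<lambda>h. h *\<^sub>R d)) (at t)"
      by (auto intro!: derivative_eq_intros)
    from has_derivative_compose[OF this grad]
    have "((\<lambda>t. f (y + t *\<^sub>R d)) has_real_derivative g (y + t *\<^sub>R d) \<bullet> d) (at t)"
      by (simp add: has_field_derivative_def mult.commute[of _ "g (y + t *\<^sub>R d) \<bullet> d"])
    then show ?thesis
      unfolding phi_def phi'_def by (auto intro!: derivative_eq_intros simp: power2_eq_square)
  qed
  have phi'_nonpos: "phi' t \<le> 0" if "0 \<le> t" for t
  proof -
    have "g (y + t *\<^sub>R d) \<bullet> d - g y \<bullet> d = (g (y + t *\<^sub>R d) - g y) \<bullet> d"
      by (simp add: inner_diff_left)
    also have "\<dots> \<le> norm (g (y + t *\<^sub>R d) - g y) * norm d"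
      by (rule norm_cauchy_schwarz)
    also have "\<dots> \<le> L * norm (t *\<^sub>R d) * norm d"
      using lipschitz[of "y + t *\<^sub>R d" y] by (simp add: mult_right_mono)
    also have "\<dots> = L * t * (norm d)\<^sup>2"
      using that by (simp add: power2_eq_square)
    finally show ?thesis unfolding phi'_def by simp
  qed
  obtain t where "0 < t" "phi 1 - phi 0 = phi' t"
    using MVT2[of 0 1 phi phi'] phi_deriv by auto
  then have "phi 1 \<le> phi 0"
    using phi'_nonpos[of t] by simp
  then show ?thesis unfolding phi_def by simp
qed

lemma pos_spanning_set_obtuse_direction:
  fixes G :: "'a::real_inner"
  assumes pss: "pos_spanning_set Lam D x a" and "0 < a" "0 < Lam" "G \<noteq> 0"
  obtains d where "d \<in> D" "G \<bullet> d \<le> - a * norm G / Lam"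
proof -
  define v where "v = - (a / norm G) *\<^sub>R G"
  have "v \<in> cball 0 a"
    using \<open>0 < a\<close> \<open>G \<noteq> 0\<close> by (simp add: v_def)
  then obtain c where c_nonneg: "\<forall>d\<in>D. 0 \<le> c d" and v_comb: "v = (\<Sum>d\<in>D. c d *\<^sub>R d)"
    and c_sum: "(\<Sum>d\<in>D. c d) \<le> Lam" and "finite D"
    using pss unfolding pos_spanning_set_def by blast
  have "v \<noteq> 0"
    using \<open>0 < a\<close> \<open>G \<noteq> 0\<close> by (simp add: v_def)
  then obtain d0 where "d0 \<in> D" "c d0 \<noteq> 0"
    using v_comb by (metis (no_types, lifting) scale_eq_0_iff sum.neutral)
  have "\<exists>d\<in>D. G \<bullet> d \<le> - a * norm G / Lam"
  proof (rule ccontr)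
    assume "\<not> (\<exists>d\<in>D. G \<bullet> d \<le> - a * norm G / Lam)"
    then have obtuse_fails: "- a * norm G / Lam < G \<bullet> d" if "d \<in> D" for d
      using that by (simp add: not_le)
    have "- a * norm G = - Lam * (a * norm G / Lam)"
      using \<open>0 < Lam\<close> by simp
    also have "\<dots> \<le> - (\<Sum>d\<in>D. c d) * (a * norm G / Lam)"
      using c_sum \<open>0 < a\<close> \<open>0 < Lam\<close> by (intro mult_right_mono) auto
    also have "\<dots> = (\<Sum>d\<in>D. c d * (- a * norm G / Lam))"
      by (subst sum_distrib_right[symmetric]) simp
    also have "\<dots> < (\<Sum>d\<in>D. c d * (G \<bullet> d))"
    proof (rule sum_strict_mono_ex1[OF \<open>finite D\<close>])
      show "\<forall>d\<in>D. c d * (- a * norm G / Lam) \<le> c d * (G \<bullet> d)"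
        using c_nonneg obtuse_fails by (meson less_imp_le mult_left_mono)
      show "\<exists>d\<in>D. c d * (- a * norm G / Lam) < c d * (G \<bullet> d)"
      proof
        have "0 < c d0"
          using c_nonneg \<open>d0 \<in> D\<close> \<open>c d0 \<noteq> 0\<close> by (simp add: order_le_neq_trans)
        then show "c d0 * (- a * norm G / Lam) < c d0 * (G \<bullet> d0)"
          by (rule mult_strict_left_mono[OF obtuse_fails[OF \<open>d0 \<in> D\<close>]])
      qed (fact \<open>d0 \<in> D\<close>)
    qed
    also have "\<dots> = G \<bullet> v"
      by (simp add: v_comb inner_sum_right)
    also have "\<dots> = - a * norm G"
      using \<open>G \<noteq> 0\<close> by (simp add: v_def power2_norm_eq_inner[symmetric] power2_eq_square)
    finally show False
      by simp
  qed
  with that show thesis by blast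
qed

lemma ds_run_alpha_pos:
  assumes run: "ds_run f alpha_max sig gdec ginc x alpha D"
  shows "0 < alpha j"
proof (induction j)
  case 0
  then show ?case using run by (simp add: ds_run_def)
next
  case (Suc j)
  have "alpha (Suc j) = min (ginc * alpha j) alpha_max \<or> alpha (Suc j) = gdec * alpha j"
    using run unfolding ds_run_def by (meson spec)
  moreover have "0 < alpha_max" "0 < gdec" "1 < ginc"
    using run by (auto simp: ds_run_def)
  ultimately show ?case using Suc by auto
qed

theorem lemma4p2:
  fixes f :: "'a::euclidean_space \<Rightarrow> real" and g :: "'a \<Rightarrow> 'a"
    and x :: "nat \<Rightarrow> 'a" and alpha :: "nat \<Rightarrow> real" and D :: "nat \<Rightarrow> 'a set"
    and L f_low Lam d_max alpha_max sig gdec ginc :: real and k :: nat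
  assumes grad: "\<And>y. (f has_derivative (\<lambda>h. g y \<bullet> h)) (at y)"
    and grad_cont: "continuous_on UNIV g"
    and L_pos: "0 < L"
    and lipschitz: "\<And>y z. norm (g y - g z) \<le> L * norm (y - z)"
    and bdd_below: "\<And>y. f_low \<le> f y"
    and run: "ds_run f alpha_max sig gdec ginc x alpha D"
    and Lam_pos: "0 < Lam" and dmax_pos: "0 < d_max"
    and pss: "\<And>j. pos_spanning_set Lam (D j) (x j) (alpha j)"
    and dbound: "\<And>j d. d \<in> D j \<Longrightarrow> norm d \<le> d_max * alpha j"
    and nonstat: "g (x k) \<noteq> 0"
    and small: "alpha k < 2 * norm (g (x k)) / ((L * d_max\<^sup>2 + sig) * Lam)"
  shows "successful_iter f x alpha D sig k"
proof -
  define a where "a = alpha k"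
  define G where "G = g (x k)"
  have "0 < a" "0 < sig"
    using ds_run_alpha_pos[OF run] run by (auto simp: a_def ds_run_def)
  obtain d where "d \<in> D k" and obtuse: "G \<bullet> d \<le> - a * norm G / Lam"
    using pos_spanning_set_obtuse_direction[OF pss \<open>0 < a\<close>[unfolded a_def] Lam_pos nonstat]
    unfolding a_def G_def by blast
  have "(norm d)\<^sup>2 \<le> (d_max * a)\<^sup>2"
    using dbound[OF \<open>d \<in> D k\<close>] by (simp add: a_def power_mono)
  then have step_bound: "L / 2 * (norm d)\<^sup>2 \<le> L / 2 * (d_max * a)\<^sup>2"
    using L_pos by (simp add: mult_left_mono)
  have "0 < (L * d_max\<^sup>2 + sig) * Lam"
    using L_pos \<open>0 < sig\<close> Lam_pos by (simp add: add_nonneg_pos)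
  then have "a * ((L * d_max\<^sup>2 + sig) * Lam) < 2 * norm G"
    using small by (simp add: a_def G_def pos_less_divide_eq)
  from mult_strict_left_mono[OF this \<open>0 < a\<close>]
  have decrease_margin: "L / 2 * (d_max * a)\<^sup>2 - a * norm G / Lam < - sig / 2 * a\<^sup>2"
    using Lam_pos by (simp add: field_simps power2_eq_square)
  have "f (x k + d) \<le> f (x k) + G \<bullet> d + L / 2 * (norm d)\<^sup>2"
    unfolding G_def by (rule lipschitz_gradient_quadratic_upper_bound[OF grad lipschitz])
  also have "\<dots> \<le> f (x k) - a * norm G / Lam + L / 2 * (d_max * a)\<^sup>2"
    using obtuse step_bound by simp
  also have "\<dots> < f (x k) - sig / 2 * a\<^sup>2"
    using decrease_margin by simp
  finally show ?thesis
    unfolding successful_iter_def a_def using \<open>d \<in> D k\<close> by blast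
qed

end
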